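(* Let $V\in L^1(\mathbb{R})$ (so $\widehat V\in L^\infty$), $s\ge1$, $N>1$. On $\Gamma_4=\{(\xi_1,\dots,\xi_4)\in\mathbb{R}^4:\xi_1+\xi_2+\xi_3+\xi_4=0\}$ define $$\Psi:=c\,\frac{\big((\theta(\xi_1))^2-(\theta(\xi_2))^2+(\theta(\xi_3))^2-(\theta(\xi_4))^2\big)\widehat V(\xi_3+\xi_4)}{\xi_1^2-\xi_2^2+\xi_3^2-\xi_4^2}$$ when the denominator is nonzero and $\Psi:=0$ otherwise, where $c$ is a fixed real constant. Suppose $|\xi_j|\sim N_j$ for dyadic integers $N_j\ge1$, $j=1,\dots,4$, and let $N_1^*\ge N_2^*\ge N_3^*\ge N_4^*$ be the decreasing rearrangement of $N_1,\dots,N_4$. Then, with implicit constants independent of $N$: (i) if $N_2^*\gg N_3^*$, then $|\Psi|\lesssim\frac{1}{(N_1^* )^2}\theta(N_1^* )\theta(N_2^* )$; (ii) if $N_2^*\sim N_3^*$, then $|\Psi|\lesssim\frac{1}{(N_1^* )^3}\theta(N_1^* )\theta(N_2^* )N_3^*N_4^*$.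
   Context: $\theta(\xi)=\theta_0(\xi/N)$, where $\theta_0$ is a fixed even smooth function, non-decreasing on $[0,\infty)$, with $\theta_0(\xi)=|\xi|^s$ for $|\xi|\ge2$ and $\theta_0(\xi)=1$ for $|\xi|\le1$. Dyadic localization $|\xi_j|\sim N_j$ means $N_j/2\le|\xi_j|\le2N_j$ (with $|\xi_j|\lesssim1$ when $N_j=1$). On $\Gamma_4$ necessarily $N_1^*\sim N_2^*$. *)

theory Defs
  imports "HOL-Analysis.Analysis"
begin

definition smooth_fun :: "(real \<Rightarrow> real) \<Rightarrow> bool" where
  "smooth_fun f \<longleftrightarrow> (\<forall>k x. ((deriv ^^ k) f) differentiable (at x))"

text \<open>Fourier transform of an L1 function (normalisation constant absorbed into c).\<close>
definition fourier :: "(real \<Rightarrow> complex) \<Rightarrow> real \<Rightarrow> complex" where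
  "fourier V \<xi> = (LINT x|lborel. V x * cis (- (\<xi> * x)))"

definition theta :: "(real \<Rightarrow> real) \<Rightarrow> real \<Rightarrow> real \<Rightarrow> real" where
  "theta \<theta>0 N \<xi> = \<theta>0 (\<xi> / N)"

definition Psi :: "real \<Rightarrow> (real \<Rightarrow> complex) \<Rightarrow> (real \<Rightarrow> real)
    \<Rightarrow> real \<Rightarrow> real \<Rightarrow> real \<Rightarrow> real \<Rightarrow> complex" where
  "Psi c V \<theta> \<xi>1 \<xi>2 \<xi>3 \<xi>4 =
     (let D = \<xi>1^2 - \<xi>2^2 + \<xi>3^2 - \<xi>4^2 in
      if D = 0 then 0
      else complex_of_real c
           * complex_of_real ((\<theta> \<xi>1)^2 - (\<theta> \<xi>2)^2 + (\<theta> \<xi>3)^2 - (\<theta> \<xi>4)^2)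
           * fourier V (\<xi>3 + \<xi>4) / complex_of_real D)"

definition dyloc :: "real \<Rightarrow> real \<Rightarrow> bool" where
  "dyloc \<xi> M \<longleftrightarrow> (if M = 1 then \<bar>\<xi>\<bar> \<le> 2 else M / 2 \<le> \<bar>\<xi>\<bar> \<and> \<bar>\<xi>\<bar> \<le> 2 * M)"

text \<open>Decreasing rearrangement: entry i (0-based) is N_{i+1}^*.\<close>
definition dec_rearr :: "real list \<Rightarrow> real list" where
  "dec_rearr xs = rev (sort xs)"

end

theory Submission
  imports Defs
begin

(* On \<Gamma>4 the denominator factorises as -2(\<xi>1+\<xi>2)(\<xi>2+\<xi>3), and a double mean value
   theorem applied to the even function \<theta>^2 writes the numerator as
   -(\<xi>1+\<xi>2)(\<xi>2+\<xi>3) N^-2 (\<theta>0^2)''(\<zeta>) with |\<zeta>| \<lesssim> N^*_1/N.  The two factors cancel, and the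
   symbol bound |(\<theta>0^2)''(y)| \<lesssim> 1 + |y|^(2s-2) together with |V^| \<le> \<parallel>V\<parallel>_L1 gives
   |\<Psi>| \<lesssim> \<theta>(N^*_1)^2/(N^*_1)^2.  Since \<xi>1+\<xi>2+\<xi>3+\<xi>4 = 0 the largest scale is never isolated,
   N^*_1 \<le> 12 N^*_2, and the doubling property of \<theta>0 turns this into (i), with no need for
   N^*_2 \<gg> N^*_3.  In case (ii), N^*_1 \<lesssim> N^*_3 \<le> N^*_3 N^*_4, so (ii) follows from (i). *)

lemma theta0_ge_one:
  fixes \<theta>0 :: "real \<Rightarrow> real"
  assumes even: "\<forall>x. \<theta>0 (- x) = \<theta>0 x"
    and mono: "mono_on {0..} \<theta>0"
    and small: "\<forall>x. \<bar>x\<bar> \<le> 1 \<longrightarrow> \<theta>0 x = 1"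
  shows "1 \<le> \<theta>0 x"
proof -
  have "\<theta>0 \<bar>x\<bar> = \<theta>0 x" using even by (cases "x \<ge> 0") auto
  moreover have "\<theta>0 0 \<le> \<theta>0 \<bar>x\<bar>" by (rule mono_onD[OF mono]) auto
  ultimately show ?thesis using small by auto
qed

(* Dilating the argument by \<kappa> \<ge> 1 costs at most the factor (2\<kappa>)^s; this is the
   doubling property behind \<theta>(N^*_1) \<lesssim> \<theta>(N^*_2) when N^*_1 \<lesssim> N^*_2. *)
lemma theta0_dilation:
  fixes \<theta>0 :: "real \<Rightarrow> real"
  assumes even: "\<forall>x. \<theta>0 (- x) = \<theta>0 x"
    and mono: "mono_on {0..} \<theta>0"
    and large: "\<forall>x. \<bar>x\<bar> \<ge> 2 \<longrightarrow> \<theta>0 x = \<bar>x\<bar> powr s"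
    and small: "\<forall>x. \<bar>x\<bar> \<le> 1 \<longrightarrow> \<theta>0 x = 1"
    and s: "s \<ge> 0" and \<kappa>: "\<kappa> \<ge> 1" and y: "y \<ge> 0"
  shows "\<theta>0 (\<kappa> * y) \<le> (2 * \<kappa>) powr s * \<theta>0 y"
proof (cases "y \<ge> 2")
  case True
  then have "2 \<le> \<kappa> * y" using mult_mono[of 1 \<kappa> 2 y] \<kappa> by simp
  then have "\<theta>0 (\<kappa> * y) = \<kappa> powr s * \<theta>0 y"
    using large True \<kappa> y by (simp add: abs_mult powr_mult)
  also have "\<dots> \<le> (2 * \<kappa>) powr s * \<theta>0 y"
    using \<kappa> s theta0_ge_one[OF even mono small, of y] by (intro mult_right_mono powr_mono2) auto
  finally show ?thesis .
next
  case False
  have "\<theta>0 (\<kappa> * y) \<le> \<theta>0 (2 * \<kappa>)"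
    using False \<kappa> y by (intro mono_onD[OF mono]) (auto intro: mult_mono)
  also have "\<dots> = (2 * \<kappa>) powr s" using large \<kappa> by simp
  also have "\<dots> \<le> (2 * \<kappa>) powr s * \<theta>0 y"
    using theta0_ge_one[OF even mono small, of y] by (simp add: mult_le_cancel_left1)
  finally show ?thesis .
qed

(* The polynomial weight r^2 (1 + (ar)^(2s-2)) coming from the second derivative of \<theta>0^2
   is dominated by \<theta>0(r)^2 for r > 0 (near 0 because \<theta>0 \<ge> 1, at infinity because s \<ge> 1). *)
lemma power_weight_le_theta0_sq:
  fixes \<theta>0 :: "real \<Rightarrow> real"
  assumes even: "\<forall>x. \<theta>0 (- x) = \<theta>0 x"
    and mono: "mono_on {0..} \<theta>0"
    and large: "\<forall>x. \<bar>x\<bar> \<ge> 2 \<longrightarrow> \<theta>0 x = \<bar>x\<bar> powr s"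
    and small: "\<forall>x. \<bar>x\<bar> \<le> 1 \<longrightarrow> \<theta>0 x = 1"
    and s: "s \<ge> 1" and a: "a > 0" and r: "r > 0"
  shows "r\<^sup>2 * (1 + (a * r) powr (2 * s - 2))
           \<le> (4 * (1 + (2 * a) powr (2 * s - 2)) + a powr (2 * s - 2) + 1) * \<theta>0 r ^ 2"
proof (cases "r \<le> 2")
  case True
  have "r\<^sup>2 \<le> 2\<^sup>2" using True r by (intro power_mono) auto
  moreover have "(a * r) powr (2 * s - 2) \<le> (2 * a) powr (2 * s - 2)"
    using True r a s by (intro powr_mono2) auto
  ultimately have "r\<^sup>2 * (1 + (a * r) powr (2 * s - 2)) \<le> 4 * (1 + (2 * a) powr (2 * s - 2))"
    by (intro mult_mono) auto
  also have "\<dots> \<le> (4 * (1 + (2 * a) powr (2 * s - 2)) + a powr (2 * s - 2) + 1) * 1"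
    by simp
  also have "\<dots> \<le> (4 * (1 + (2 * a) powr (2 * s - 2)) + a powr (2 * s - 2) + 1) * \<theta>0 r ^ 2"
    using theta0_ge_one[OF even mono small, of r] by (intro mult_left_mono one_le_power) auto
  finally show ?thesis .
next
  case False
  have r2: "r\<^sup>2 = r powr 2" using r by (simp add: powr_numeral)
  have "\<theta>0 r ^ 2 = (r powr s)\<^sup>2" using large False r by simp
  also have "\<dots> = r powr (2 * s)" by (simp add: power2_eq_square powr_add[symmetric])
  finally have theta_sq: "\<theta>0 r ^ 2 = r powr (2 * s)" .
  have "r\<^sup>2 \<le> r powr (2 * s)" unfolding r2 using False s by (intro powr_mono) auto
  moreover have "r\<^sup>2 * (a * r) powr (2 * s - 2) = a powr (2 * s - 2) * r powr (2 * s)"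
  proof -
    have "r powr 2 * (a * r) powr (2 * s - 2) = a powr (2 * s - 2) * (r powr 2 * r powr (2 * s - 2))"
      using a r by (simp add: powr_mult)
    also have "r powr 2 * r powr (2 * s - 2) = r powr (2 * s)" by (simp add: powr_add[symmetric])
    finally show ?thesis unfolding r2 .
  qed
  ultimately have "r\<^sup>2 * (1 + (a * r) powr (2 * s - 2)) \<le> (1 + a powr (2 * s - 2)) * r powr (2 * s)"
    by (simp add: distrib_left distrib_right)
  also have "\<dots> \<le> (4 * (1 + (2 * a) powr (2 * s - 2)) + a powr (2 * s - 2) + 1) * r powr (2 * s)"
    by (intro mult_right_mono) auto
  finally show ?thesis unfolding theta_sq .
qed

lemma mvt_between:
  fixes f :: "real \<Rightarrow> real"
  assumes "\<And>x. (f has_real_derivative f' x) (at x)"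
  shows "\<exists>z. min a b \<le> z \<and> z \<le> max a b \<and> f b - f a = (b - a) * f' z"
proof (cases a b rule: linorder_cases)
  case less
  then obtain z where "a < z" "z < b" "f b - f a = (b - a) * f' z"
    using MVT2[of a b f f'] assms by blast
  then show ?thesis by (intro exI[of _ z]) auto
next
  case equal
  then show ?thesis by auto
next
  case greater
  then obtain z where "b < z" "z < a" "f a - f b = (a - b) * f' z"
    using MVT2[of b a f f'] assms by blast
  then show ?thesis by (intro exI[of _ z]) (auto simp: algebra_simps)
qed

(* Apply the MVT to t \<mapsto> F(t-x2) - F(t+v-x2) (v = x2+x3) and then to F' itself. *)
lemma second_difference_mvt:
  fixes F F1 F2 :: "real \<Rightarrow> real"
  assumes d1: "\<And>x. (F has_real_derivative F1 x) (at x)"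
    and d2: "\<And>x. (F1 has_real_derivative F2 x) (at x)"
    and even: "\<And>x. F (- x) = F x"
    and sum: "x1 + x2 + x3 + x4 = 0"
  shows "\<exists>\<zeta>. \<bar>\<zeta>\<bar> \<le> \<bar>x1 + x2\<bar> + \<bar>x2 + x3\<bar> + \<bar>x2\<bar>
              \<and> F x1 - F x2 + F x3 - F x4 = - ((x1 + x2) * (x2 + x3) * F2 \<zeta>)"
proof -
  define u v where "u = x1 + x2" and "v = x2 + x3"
  define h where "h t = F (t - x2) - F x2 + F (v - x2) - F (t + v - x2)" for t
  have dh: "(h has_real_derivative F1 (t - x2) - F1 (t + v - x2)) (at t)" for t
    unfolding h_def by (auto intro!: derivative_eq_intros d1[THEN DERIV_chain2])
  obtain t where t: "min 0 u \<le> t" "t \<le> max 0 u"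
      and ht: "h u - h 0 = (u - 0) * (F1 (t - x2) - F1 (t + v - x2))"
    using mvt_between[OF dh, of 0 u] by blast
  obtain \<zeta> where \<zeta>: "min (t + v - x2) (t - x2) \<le> \<zeta>" "\<zeta> \<le> max (t + v - x2) (t - x2)"
      and F1_diff: "F1 (t - x2) - F1 (t + v - x2) = ((t - x2) - (t + v - x2)) * F2 \<zeta>"
    using mvt_between[OF d2, of "t + v - x2" "t - x2"] by blast
  have "h 0 = 0" unfolding h_def using even[of x2] by simp
  moreover have "h u = F x1 - F x2 + F x3 - F x4"
  proof -
    have "u + v - x2 = - x4" using sum by (simp add: u_def v_def)
    then show ?thesis using even[of x4] by (simp add: h_def u_def v_def)
  qed
  ultimately have "F x1 - F x2 + F x3 - F x4 = - (u * v * F2 \<zeta>)"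
    using ht F1_diff by (simp add: algebra_simps)
  moreover have "\<bar>\<zeta>\<bar> \<le> \<bar>u\<bar> + \<bar>v\<bar> + \<bar>x2\<bar>"
    using t \<zeta> by (auto simp: min_def max_def split: if_splits)
  ultimately show ?thesis unfolding u_def v_def by blast
qed

lemma second_derivative_local:
  fixes F F1 F2 G G1 :: "real \<Rightarrow> real"
  assumes S: "open S" "y \<in> S"
    and dF: "\<And>x. (F has_real_derivative F1 x) (at x)"
    and dF1: "(F1 has_real_derivative F2 y) (at y)"
    and eq: "\<And>x. x \<in> S \<Longrightarrow> F x = G x"
    and dG: "\<And>x. x \<in> S \<Longrightarrow> (G has_real_derivative G1 x) (at x)"
    and dG1: "(G1 has_real_derivative G2) (at y)"
  shows "F2 y = G2"
proof -
  have "F1 x = G1 x" if "x \<in> S" for x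
  proof -
    have "(F has_real_derivative G1 x) (at x)"
      by (rule has_field_derivative_transform_within_open[OF dG[OF that] S(1) that]) (use eq in auto)
    then show ?thesis using dF DERIV_unique by blast
  qed
  then have "(F1 has_real_derivative G2) (at y)"
    by (intro has_field_derivative_transform_within_open[OF dG1 S]) auto
  then show ?thesis using dF1 DERIV_unique by blast
qed

(* A C^2 function equal to |x|^a for |x| \<ge> 2 satisfies |f''(y)| \<lesssim> 1 + |y|^(a-2):
   on [-2,2] by compactness, outside by differentiating the power explicitly. *)
lemma powr_tail_second_derivative_bound:
  fixes f f1 f2 :: "real \<Rightarrow> real"
  assumes d1: "\<And>x. (f has_real_derivative f1 x) (at x)"
    and d2: "\<And>x. (f1 has_real_derivative f2 x) (at x)"
    and cont: "continuous_on {-2..2} f2"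
    and tail: "\<And>x. \<bar>x\<bar> \<ge> 2 \<Longrightarrow> f x = \<bar>x\<bar> powr a"
  shows "\<exists>K>0. \<forall>y. \<bar>f2 y\<bar> \<le> K * (1 + \<bar>y\<bar> powr (a - 2))"
proof -
  have "bounded (f2 ` {-2..2})"
    by (rule compact_imp_bounded[OF compact_continuous_image[OF cont compact_Icc]])
  then obtain K0 where K0: "\<forall>y\<in>{-2..2}. \<bar>f2 y\<bar> \<le> K0"
    unfolding bounded_iff by auto
  have right: "f2 y = a * (a - 1) * y powr (a - 2)" if "y > 2" for y
  proof (rule second_derivative_local[OF open_greaterThan _ d1 d2])
    show "y \<in> {2<..}" using that by simp
    show "f x = x powr a" if "x \<in> {2<..}" for x using tail[of x] that by simp
    show "((\<lambda>x. x powr a) has_real_derivative a * x powr (a - 1)) (at x)" if "x \<in> {2<..}" for x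
      using that by (auto intro!: derivative_eq_intros)
    show "((\<lambda>x. a * x powr (a - 1)) has_real_derivative a * (a - 1) * y powr (a - 2)) (at y)"
      using that by (auto intro!: derivative_eq_intros simp: algebra_simps)
  qed
  have left: "f2 y = a * (a - 1) * (- y) powr (a - 2)" if "y < -2" for y
  proof (rule second_derivative_local[OF open_lessThan _ d1 d2])
    show "y \<in> {..<-2}" using that by simp
    show "f x = (- x) powr a" if "x \<in> {..<-2}" for x using tail[of x] that by simp
    show "((\<lambda>x. (- x) powr a) has_real_derivative - (a * (- x) powr (a - 1))) (at x)"
      if "x \<in> {..<-2}" for x
      using that by (auto intro!: derivative_eq_intros)
    show "((\<lambda>x. - (a * (- x) powr (a - 1))) has_real_derivative a * (a - 1) * (- y) powr (a - 2)) (at y)"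
      using that by (auto intro!: derivative_eq_intros simp: algebra_simps)
  qed
  define K where "K = \<bar>K0\<bar> + \<bar>a * (a - 1)\<bar> + 1"
  have "\<bar>f2 y\<bar> \<le> K * (1 + \<bar>y\<bar> powr (a - 2))" for y
  proof (cases "y \<in> {-2..2}")
    case True
    then have "\<bar>f2 y\<bar> \<le> K * 1" using K0 unfolding K_def by fastforce
    also have "\<dots> \<le> K * (1 + \<bar>y\<bar> powr (a - 2))" by (intro mult_left_mono) (auto simp: K_def)
    finally show ?thesis .
  next
    case False
    then have "\<bar>f2 y\<bar> = \<bar>a * (a - 1)\<bar> * \<bar>y\<bar> powr (a - 2)"
      using right[of y] left[of y] by (cases "y > 2") (auto simp: abs_mult)
    also have "\<dots> \<le> K * (1 + \<bar>y\<bar> powr (a - 2))" unfolding K_def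
      by (intro mult_mono) auto
    finally show ?thesis .
  qed
  moreover have "K > 0" unfolding K_def by simp
  ultimately show ?thesis by blast
qed

lemma smooth_square_twice_differentiable:
  fixes g :: "real \<Rightarrow> real"
  assumes "smooth_fun g"
  shows "\<exists>g1 g2. (\<forall>x. ((\<lambda>x. g x ^ 2) has_real_derivative g1 x) (at x))
               \<and> (\<forall>x. (g1 has_real_derivative g2 x) (at x)) \<and> continuous_on UNIV g2"
proof -
  have diff: "((deriv ^^ k) g) differentiable (at x)" for k x
    using assms unfolding smooth_fun_def by blast
  have dg: "(g has_real_derivative deriv g x) (at x)" for x
    using diff[of 0 x] by (simp add: DERIV_deriv_iff_real_differentiable)
  have dg': "(deriv g has_real_derivative deriv (deriv g) x) (at x)" for x
    using diff[of 1 x] by (simp add: DERIV_deriv_iff_real_differentiable)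
  have cont_g'': "isCont (deriv (deriv g)) x" for x
    using diff[of 2 x] by (simp add: numeral_2_eq_2 differentiable_imp_continuous_within)
  have cont_g: "isCont g x" and cont_g': "isCont (deriv g) x" for x
    using DERIV_isCont dg dg' by blast+
  show ?thesis
  proof (intro exI conjI allI)
    show "((\<lambda>x. g x ^ 2) has_real_derivative 2 * g x * deriv g x) (at x)" for x
      by (auto intro!: derivative_eq_intros dg)
    show "((\<lambda>x. 2 * g x * deriv g x) has_real_derivative
            2 * (deriv g x * deriv g x + g x * deriv (deriv g) x)) (at x)" for x
      by (auto intro!: derivative_eq_intros dg dg' simp: algebra_simps)
    show "continuous_on UNIV (\<lambda>x. 2 * (deriv g x * deriv g x + g x * deriv (deriv g) x))"
      by (intro continuous_at_imp_continuous_on ballI)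
         (auto intro!: continuous_intros cont_g cont_g' cont_g'')
  qed
qed

lemma theta0_sq_second_derivative_bound:
  fixes \<theta>0 :: "real \<Rightarrow> real"
  assumes smooth: "smooth_fun \<theta>0"
    and large: "\<forall>x. \<bar>x\<bar> \<ge> 2 \<longrightarrow> \<theta>0 x = \<bar>x\<bar> powr s"
  shows "\<exists>F1 F2 K. (\<forall>x. ((\<lambda>x. \<theta>0 x ^ 2) has_real_derivative F1 x) (at x))
            \<and> (\<forall>x. (F1 has_real_derivative F2 x) (at x))
            \<and> K > 0 \<and> (\<forall>y. \<bar>F2 y\<bar> \<le> K * (1 + \<bar>y\<bar> powr (2 * s - 2)))"
proof -
  obtain F1 F2 where d1: "\<forall>x. ((\<lambda>x. \<theta>0 x ^ 2) has_real_derivative F1 x) (at x)"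
      and d2: "\<forall>x. (F1 has_real_derivative F2 x) (at x)" and cont: "continuous_on UNIV F2"
    using smooth_square_twice_differentiable[OF smooth] by blast
  have "\<theta>0 x ^ 2 = \<bar>x\<bar> powr (2 * s)" if "\<bar>x\<bar> \<ge> 2" for x
    using large that by (simp add: power2_eq_square powr_add[symmetric])
  then obtain K where "K > 0" "\<forall>y. \<bar>F2 y\<bar> \<le> K * (1 + \<bar>y\<bar> powr (2 * s - 2))"
    using powr_tail_second_derivative_bound[of "\<lambda>x. \<theta>0 x ^ 2" F1 F2 "2 * s"] d1 d2
      continuous_on_subset[OF cont] by blast
  then show ?thesis using d1 d2 by blast
qed

lemma resonance_factorisation:
  fixes \<xi>1 \<xi>2 \<xi>3 \<xi>4 :: real
  assumes "\<xi>1 + \<xi>2 + \<xi>3 + \<xi>4 = 0"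
  shows "\<xi>1\<^sup>2 - \<xi>2\<^sup>2 + \<xi>3\<^sup>2 - \<xi>4\<^sup>2 = - 2 * (\<xi>1 + \<xi>2) * (\<xi>2 + \<xi>3)"
proof -
  have \<xi>4: "\<xi>4 = - (\<xi>1 + \<xi>2 + \<xi>3)" using assms by linarith
  show ?thesis unfolding \<xi>4 by (simp add: power2_eq_square algebra_simps)
qed

(* |V^(\<xi>)| \<le> \<parallel>V\<parallel>_L1.  For the Bochner integral this holds even without integrability. *)
lemma norm_fourier_le: "norm (fourier V \<xi>) \<le> (LINT x|lborel. norm (V x))"
proof -
  have "norm (fourier V \<xi>) \<le> (LINT x|lborel. norm (V x * cis (- (\<xi> * x))))"
    unfolding fourier_def by (rule integral_norm_bound)
  also have "\<dots> = (LINT x|lborel. norm (V x))" by (simp add: norm_mult)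
  finally show ?thesis .
qed

(* The core estimate at a single scale M dominating |\<xi>1|, |\<xi>2|, |\<xi>3|: the factors \<xi>1+\<xi>2 and \<xi>2+\<xi>3
   produced by the double MVT cancel the factorised denominator, leaving only (\<theta>0^2)''. *)
lemma Psi_scale_bound:
  fixes \<theta>0 F1 F2 :: "real \<Rightarrow> real" and V :: "real \<Rightarrow> complex"
  assumes even: "\<forall>x. \<theta>0 (- x) = \<theta>0 x"
    and d1: "\<forall>x. ((\<lambda>x. \<theta>0 x ^ 2) has_real_derivative F1 x) (at x)"
    and d2: "\<forall>x. (F1 has_real_derivative F2 x) (at x)"
    and F2_bound: "\<forall>y. \<bar>F2 y\<bar> \<le> K * (1 + \<bar>y\<bar> powr (2 * s - 2))"
    and fourier_bound: "\<forall>\<eta>. norm (fourier V \<eta>) \<le> B"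
    and K: "K > 0" and s: "s \<ge> 1" and N: "N > 0"
    and sum: "\<xi>1 + \<xi>2 + \<xi>3 + \<xi>4 = 0"
    and scale: "\<bar>\<xi>1\<bar> \<le> 2 * M" "\<bar>\<xi>2\<bar> \<le> 2 * M" "\<bar>\<xi>3\<bar> \<le> 2 * M"
  shows "norm (Psi c V (theta \<theta>0 N) \<xi>1 \<xi>2 \<xi>3 \<xi>4)
           \<le> \<bar>c\<bar> * B * K * (1 + (10 * M / N) powr (2 * s - 2)) / (2 * N\<^sup>2)"
proof -
  define D where "D = \<xi>1\<^sup>2 - \<xi>2\<^sup>2 + \<xi>3\<^sup>2 - \<xi>4\<^sup>2"
  have B: "0 \<le> B" using fourier_bound norm_ge_zero order_trans by blast
  show ?thesis
  proof (cases "D = 0")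
    case True
    then show ?thesis using B K by (simp add: Psi_def D_def)
  next
    case False
    define u v where "u = \<xi>1 + \<xi>2" and "v = \<xi>2 + \<xi>3"
    have D: "D = - 2 * u * v" unfolding D_def u_def v_def by (rule resonance_factorisation[OF sum])
    have "\<xi>1 / N + \<xi>2 / N + \<xi>3 / N + \<xi>4 / N = 0"
      using sum by (simp add: add_divide_distrib[symmetric])
    then obtain \<zeta> where \<zeta>: "\<bar>\<zeta>\<bar> \<le> \<bar>\<xi>1/N + \<xi>2/N\<bar> + \<bar>\<xi>2/N + \<xi>3/N\<bar> + \<bar>\<xi>2/N\<bar>"
      and numerator: "\<theta>0 (\<xi>1/N)^2 - \<theta>0 (\<xi>2/N)^2 + \<theta>0 (\<xi>3/N)^2 - \<theta>0 (\<xi>4/N)^2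
          = - ((\<xi>1/N + \<xi>2/N) * (\<xi>2/N + \<xi>3/N) * F2 \<zeta>)"
      using second_difference_mvt[of "\<lambda>x. \<theta>0 x ^ 2" F1 F2, OF d1[rule_format] d2[rule_format]]
        even by (metis (no_types, lifting))
    have "\<bar>\<zeta>\<bar> \<le> (\<bar>\<xi>1 + \<xi>2\<bar> + \<bar>\<xi>2 + \<xi>3\<bar> + \<bar>\<xi>2\<bar>) / N"
      using \<zeta> N by (simp add: add_divide_distrib[symmetric])
    also have "\<dots> \<le> 10 * M / N"
    proof (rule divide_right_mono)
      show "\<bar>\<xi>1 + \<xi>2\<bar> + \<bar>\<xi>2 + \<xi>3\<bar> + \<bar>\<xi>2\<bar> \<le> 10 * M"
        using scale abs_triangle_ineq[of \<xi>1 \<xi>2] abs_triangle_ineq[of \<xi>2 \<xi>3] by linarith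
    qed (use N in simp)
    finally have "\<bar>\<zeta>\<bar> powr (2 * s - 2) \<le> (10 * M / N) powr (2 * s - 2)"
      using s by (intro powr_mono2) auto
    then have F2\<zeta>: "\<bar>F2 \<zeta>\<bar> \<le> K * (1 + (10 * M / N) powr (2 * s - 2))"
      using order_trans[OF F2_bound[rule_format] mult_left_mono] K by auto
    have uv: "u \<noteq> 0" "v \<noteq> 0" using False D by auto
    have "(\<xi>1/N + \<xi>2/N) * (\<xi>2/N + \<xi>3/N) = u * v / N\<^sup>2"
      using N unfolding u_def v_def by (simp add: field_simps power2_eq_square)
    then have "Psi c V (theta \<theta>0 N) \<xi>1 \<xi>2 \<xi>3 \<xi>4
        = of_real c * of_real (- (u * v * F2 \<zeta>) / N\<^sup>2) * fourier V (\<xi>3 + \<xi>4) / of_real D"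
      using False numerator unfolding Psi_def D_def theta_def Let_def by simp
    then have "norm (Psi c V (theta \<theta>0 N) \<xi>1 \<xi>2 \<xi>3 \<xi>4)
        = \<bar>c\<bar> * \<bar>- (u * v * F2 \<zeta>) / N\<^sup>2\<bar> * norm (fourier V (\<xi>3 + \<xi>4)) / \<bar>D\<bar>"
      by (simp only: norm_mult norm_divide norm_of_real)
    also have "\<dots> = \<bar>c\<bar> * \<bar>F2 \<zeta>\<bar> / (2 * N\<^sup>2) * norm (fourier V (\<xi>3 + \<xi>4))"
      using uv N unfolding D by (simp add: abs_mult field_simps)
    also have "\<dots> \<le> \<bar>c\<bar> * (K * (1 + (10 * M / N) powr (2 * s - 2))) / (2 * N\<^sup>2) * B"
      using F2\<zeta> fourier_bound N by (intro mult_mono divide_right_mono mult_left_mono) auto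
    finally show ?thesis by (simp add: algebra_simps)
  qed
qed

lemma dec_rearr4:
  fixes a b c d :: real
  defines "L \<equiv> dec_rearr [a, b, c, d]"
  shows "L!0 \<in> {a, b, c, d}" "L!1 \<in> {a, b, c, d}" "L!2 \<in> {a, b, c, d}" "L!3 \<in> {a, b, c, d}"
    and "a \<le> L!0" "b \<le> L!0" "c \<le> L!0" "d \<le> L!0"
    and "min a b \<le> L!1" "min a c \<le> L!1" "min a d \<le> L!1"
        "min b c \<le> L!1" "min b d \<le> L!1" "min c d \<le> L!1"
  unfolding L_def dec_rearr_def by (auto simp: min_def)

lemma dyloc_upper: "dyloc x m \<Longrightarrow> 1 \<le> m \<Longrightarrow> \<bar>x\<bar> \<le> 2 * m"
  unfolding dyloc_def by (auto split: if_splits)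

(* If x is the only possibly large frequency and |x| is controlled by three frequencies of size
   \<lesssim> L, then its dyadic size is \<lesssim> L: the largest scale is never isolated. *)
lemma peak_comparable:
  assumes "dyloc x m" "\<bar>x\<bar> \<le> \<bar>y\<bar> + \<bar>z\<bar> + \<bar>w\<bar>"
    and "\<bar>y\<bar> \<le> 2 * my" "\<bar>z\<bar> \<le> 2 * mz" "\<bar>w\<bar> \<le> 2 * mw"
    and "min m my \<le> L" "min m mz \<le> L" "min m mw \<le> L" "1 \<le> L"
  shows "m \<le> 12 * L"
  using assms unfolding dyloc_def by (auto simp: min_def split: if_splits)

lemma dyadic_scales:
  fixes \<xi>1 \<xi>2 \<xi>3 \<xi>4 m1 m2 m3 m4 :: real
  assumes sum: "\<xi>1 + \<xi>2 + \<xi>3 + \<xi>4 = 0"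
    and loc: "dyloc \<xi>1 m1" "dyloc \<xi>2 m2" "dyloc \<xi>3 m3" "dyloc \<xi>4 m4"
    and ge1: "1 \<le> m1" "1 \<le> m2" "1 \<le> m3" "1 \<le> m4"
  defines "L \<equiv> dec_rearr [m1, m2, m3, m4]"
  shows "\<bar>\<xi>1\<bar> \<le> 2 * L!0" "\<bar>\<xi>2\<bar> \<le> 2 * L!0" "\<bar>\<xi>3\<bar> \<le> 2 * L!0"
    and "1 \<le> L!0" "1 \<le> L!1" "1 \<le> L!2" "1 \<le> L!3"
    and "L!0 \<le> 12 * L!1"
proof -
  note R = dec_rearr4[where a=m1 and b=m2 and c=m3 and d=m4, folded L_def]
  note up = dyloc_upper[OF loc(1) ge1(1)] dyloc_upper[OF loc(2) ge1(2)]
    dyloc_upper[OF loc(3) ge1(3)] dyloc_upper[OF loc(4) ge1(4)]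
  show "\<bar>\<xi>1\<bar> \<le> 2 * L!0" "\<bar>\<xi>2\<bar> \<le> 2 * L!0" "\<bar>\<xi>3\<bar> \<le> 2 * L!0"
    using up R(5-7) by auto
  show "1 \<le> L!0" "1 \<le> L!1" "1 \<le> L!2" "1 \<le> L!3"
    using R(1-4) ge1 by auto
  have triangle: "\<bar>\<xi>1\<bar> \<le> \<bar>\<xi>2\<bar> + \<bar>\<xi>3\<bar> + \<bar>\<xi>4\<bar>" "\<bar>\<xi>2\<bar> \<le> \<bar>\<xi>1\<bar> + \<bar>\<xi>3\<bar> + \<bar>\<xi>4\<bar>"
    "\<bar>\<xi>3\<bar> \<le> \<bar>\<xi>1\<bar> + \<bar>\<xi>2\<bar> + \<bar>\<xi>4\<bar>" "\<bar>\<xi>4\<bar> \<le> \<bar>\<xi>1\<bar> + \<bar>\<xi>2\<bar> + \<bar>\<xi>3\<bar>"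
    using sum by auto
  have L1: "1 \<le> L!1" using R(2) ge1 by auto
  have "m1 \<le> 12 * L!1"
    by (rule peak_comparable[OF loc(1) triangle(1) up(2-4) R(9-11) L1])
  moreover have "m2 \<le> 12 * L!1"
    using R(9,12,13) by (intro peak_comparable[OF loc(2) triangle(2) up(1,3,4) _ _ _ L1])
      (simp_all add: min.commute)
  moreover have "m3 \<le> 12 * L!1"
    using R(10,12,14) by (intro peak_comparable[OF loc(3) triangle(3) up(1,2,4) _ _ _ L1])
      (simp_all add: min.commute)
  moreover have "m4 \<le> 12 * L!1"
    using R(11,13,14) by (intro peak_comparable[OF loc(4) triangle(4) up(1-3) _ _ _ L1])
      (simp_all add: min.commute)
  ultimately show "L!0 \<le> 12 * L!1" using R(1) by auto
qed

lemma Psi_dyadic_estimate: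
  fixes \<theta>0 F1 F2 :: "real \<Rightarrow> real" and V :: "real \<Rightarrow> complex"
    and c :: real
  assumes even: "\<forall>x. \<theta>0 (- x) = \<theta>0 x"
    and mono: "mono_on {0..} \<theta>0"
    and large: "\<forall>x. \<bar>x\<bar> \<ge> 2 \<longrightarrow> \<theta>0 x = \<bar>x\<bar> powr s"
    and small: "\<forall>x. \<bar>x\<bar> \<le> 1 \<longrightarrow> \<theta>0 x = 1"
    and d1: "\<forall>x. ((\<lambda>x. \<theta>0 x ^ 2) has_real_derivative F1 x) (at x)"
    and d2: "\<forall>x. (F1 has_real_derivative F2 x) (at x)"
    and F2_bound: "\<forall>y. \<bar>F2 y\<bar> \<le> K * (1 + \<bar>y\<bar> powr (2 * s - 2))"
    and fourier_bound: "\<forall>\<eta>. norm (fourier V \<eta>) \<le> B"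
    and K: "K > 0" and s: "s \<ge> 1" and N: "N > 0"
    and sum: "\<xi>1 + \<xi>2 + \<xi>3 + \<xi>4 = 0"
    and loc: "dyloc \<xi>1 m1" "dyloc \<xi>2 m2" "dyloc \<xi>3 m3" "dyloc \<xi>4 m4"
    and ge1: "1 \<le> m1" "1 \<le> m2" "1 \<le> m3" "1 \<le> m4"
  defines "L \<equiv> dec_rearr [m1, m2, m3, m4]"
    and "C \<equiv> \<bar>c\<bar> * B * K / 2 * (4 * (1 + 20 powr (2 * s - 2)) + 10 powr (2 * s - 2) + 1) * 24 powr s"
  shows "norm (Psi c V (theta \<theta>0 N) \<xi>1 \<xi>2 \<xi>3 \<xi>4)
           \<le> C * theta \<theta>0 N (L!0) * theta \<theta>0 N (L!1) / (L!0)\<^sup>2"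
proof -
  note scales = dyadic_scales[OF sum loc ge1, folded L_def]
  define M r \<rho> where "M = L!0" and "r = L!0 / N" and "\<rho> = L!1 / N"
  define C2 where "C2 = 4 * (1 + 20 powr (2 * s - 2)) + 10 powr (2 * s - 2) + 1"
  have M: "M > 0" and r: "r > 0" and \<rho>: "\<rho> \<ge> 0"
    using scales N by (simp_all add: M_def r_def \<rho>_def)
  have B: "0 \<le> B" using fourier_bound norm_ge_zero order_trans by blast
  have \<theta>0_ge1: "1 \<le> \<theta>0 x" for x by (rule theta0_ge_one[OF even mono small])
  have r_comparable: "\<theta>0 r \<le> 24 powr s * \<theta>0 \<rho>"
  proof -
    have "\<theta>0 r \<le> \<theta>0 (12 * \<rho>)"
      using scales(8) r \<rho> N by (intro mono_onD[OF mono]) (auto simp: r_def \<rho>_def divide_right_mono)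
    also have "\<dots> \<le> (2 * 12) powr s * \<theta>0 \<rho>"
      using s \<rho> by (intro theta0_dilation[OF even mono large small]) auto
    finally show ?thesis by simp
  qed
  have "norm (Psi c V (theta \<theta>0 N) \<xi>1 \<xi>2 \<xi>3 \<xi>4)
        \<le> \<bar>c\<bar> * B * K * (1 + (10 * M / N) powr (2 * s - 2)) / (2 * N\<^sup>2)"
    using scales(1-3) unfolding M_def
    by (intro Psi_scale_bound[OF even d1 d2 F2_bound fourier_bound K s N sum])
  also have "\<dots> = \<bar>c\<bar> * B * K / 2 * (r\<^sup>2 * (1 + (10 * r) powr (2 * s - 2))) / M\<^sup>2"
    using M N by (simp add: r_def M_def field_simps power2_eq_square)
  also have "\<dots> \<le> \<bar>c\<bar> * B * K / 2 * (C2 * \<theta>0 r ^ 2) / M\<^sup>2"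
    using power_weight_le_theta0_sq[OF even mono large small s _ r, of 10] B K
    by (intro divide_right_mono mult_left_mono) (auto simp: C2_def)
  also have "\<dots> \<le> \<bar>c\<bar> * B * K / 2 * (C2 * (\<theta>0 r * (24 powr s * \<theta>0 \<rho>))) / M\<^sup>2"
    using r_comparable \<theta>0_ge1[of r] B K
    by (intro divide_right_mono mult_left_mono) (auto simp: C2_def power2_eq_square)
  also have "\<dots> = C * theta \<theta>0 N (L!0) * theta \<theta>0 N (L!1) / (L!0)\<^sup>2"
    by (simp add: C_def C2_def M_def r_def \<rho>_def theta_def)
  finally show ?thesis .
qed

definition Psi_dyadic_bound :: "real \<Rightarrow> (real \<Rightarrow> complex) \<Rightarrow> (real \<Rightarrow> real) \<Rightarrow> real \<Rightarrow> bool" where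
  "Psi_dyadic_bound c V \<theta>0 C \<longleftrightarrow>
     (\<forall>N \<xi>1 \<xi>2 \<xi>3 \<xi>4 m1 m2 m3 m4. N > 0 \<longrightarrow> \<xi>1 + \<xi>2 + \<xi>3 + \<xi>4 = 0 \<longrightarrow>
        dyloc \<xi>1 m1 \<longrightarrow> dyloc \<xi>2 m2 \<longrightarrow> dyloc \<xi>3 m3 \<longrightarrow> dyloc \<xi>4 m4 \<longrightarrow>
        1 \<le> m1 \<longrightarrow> 1 \<le> m2 \<longrightarrow> 1 \<le> m3 \<longrightarrow> 1 \<le> m4 \<longrightarrow>
        (let L = dec_rearr [m1, m2, m3, m4] in
         norm (Psi c V (theta \<theta>0 N) \<xi>1 \<xi>2 \<xi>3 \<xi>4)
           \<le> C * theta \<theta>0 N (L!0) * theta \<theta>0 N (L!1) / (L!0)\<^sup>2))"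

lemma uniform_dyadic_estimate:
  fixes V :: "real \<Rightarrow> complex" and \<theta>0 :: "real \<Rightarrow> real" and s c :: real
  assumes s: "s \<ge> 1"
    and smooth: "smooth_fun \<theta>0"
    and even: "\<forall>x. \<theta>0 (- x) = \<theta>0 x"
    and mono: "mono_on {0..} \<theta>0"
    and large: "\<forall>x. \<bar>x\<bar> \<ge> 2 \<longrightarrow> \<theta>0 x = \<bar>x\<bar> powr s"
    and small: "\<forall>x. \<bar>x\<bar> \<le> 1 \<longrightarrow> \<theta>0 x = 1"
  shows "\<exists>C\<ge>0. Psi_dyadic_bound c V \<theta>0 C"
proof -
  obtain F1 F2 K where d1: "\<forall>x. ((\<lambda>x. \<theta>0 x ^ 2) has_real_derivative F1 x) (at x)"
      and d2: "\<forall>x. (F1 has_real_derivative F2 x) (at x)"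
      and K: "K > 0" and F2_bound: "\<forall>y. \<bar>F2 y\<bar> \<le> K * (1 + \<bar>y\<bar> powr (2 * s - 2))"
    using theta0_sq_second_derivative_bound[OF smooth large] by blast
  define B where "B = (LINT x|lborel. norm (V x))"
  have fourier_bound: "\<forall>\<eta>. norm (fourier V \<eta>) \<le> B"
    unfolding B_def using norm_fourier_le by blast
  have "0 \<le> B" using fourier_bound norm_ge_zero order_trans by blast
  then show ?thesis
    using Psi_dyadic_estimate[OF even mono large small d1 d2 F2_bound fourier_bound K s]
    unfolding Psi_dyadic_bound_def Let_def
    by (intro exI[of _ "\<bar>c\<bar> * B * K / 2 * (4 * (1 + 20 powr (2 * s - 2)) + 10 powr (2 * s - 2) + 1)
                         * 24 powr s"] conjI allI impI) (use K in auto)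
qed

lemma comparable_scales_bound:
  fixes n C L0 L1 L2 L3 A :: real
  assumes n: "n \<le> C / L0\<^sup>2" and C: "0 \<le> C"
    and L: "1 \<le> L0" "L0 \<le> 12 * L1" "L1 \<le> A * L2" "1 \<le> L3" "0 \<le> A * L2"
  shows "n \<le> 12 * A * C * L2 * L3 / L0 ^ 3"
proof -
  have "L0 \<le> 12 * A * L2 * L3"
    using L mult_left_mono[OF L(4) L(5)] by linarith
  then have "C * L0 \<le> C * (12 * A * L2 * L3)" using C by (rule mult_left_mono)
  then have "C * L0 / L0 ^ 3 \<le> 12 * A * C * L2 * L3 / L0 ^ 3"
    using L(1) by (intro divide_right_mono) (auto simp: algebra_simps)
  moreover have "C / L0\<^sup>2 = C * L0 / L0 ^ 3" using L(1) by (simp add: power2_eq_square power3_eq_cube)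
  ultimately show ?thesis using n by linarith
qed

lemma Psi_bound_separated_scales:
  assumes bound: "Psi_dyadic_bound c V \<theta>0 C"
  shows "\<exists>K\<ge>1. \<exists>C. \<forall>N \<xi>1 \<xi>2 \<xi>3 \<xi>4 (k1::nat) (k2::nat) (k3::nat) (k4::nat).
       N > 1 \<longrightarrow> \<xi>1 + \<xi>2 + \<xi>3 + \<xi>4 = 0 \<longrightarrow>
       dyloc \<xi>1 (2^k1) \<longrightarrow> dyloc \<xi>2 (2^k2) \<longrightarrow> dyloc \<xi>3 (2^k3) \<longrightarrow> dyloc \<xi>4 (2^k4) \<longrightarrow>
       (let Ns = dec_rearr [2^k1, 2^k2, 2^k3, 2^k4]; \<theta> = theta \<theta>0 N in
        Ns ! 1 \<ge> K * Ns ! 2 \<longrightarrow>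
        norm (Psi c V \<theta> \<xi>1 \<xi>2 \<xi>3 \<xi>4) \<le> C * \<theta> (Ns ! 0) * \<theta> (Ns ! 1) / (Ns ! 0)^2)"
  using bound unfolding Psi_dyadic_bound_def Let_def
  by (intro exI[of _ 1] exI[of _ C] conjI allI impI) auto

lemma Psi_bound_comparable_scales_instance:
  fixes k1 k2 k3 k4 :: nat
  assumes bound: "Psi_dyadic_bound c V \<theta>0 C" and C: "0 \<le> C" and nonneg: "\<forall>x. 0 \<le> \<theta>0 x"
    and A: "1 \<le> A" and N: "N > 1" and sum: "\<xi>1 + \<xi>2 + \<xi>3 + \<xi>4 = 0"
    and loc: "dyloc \<xi>1 (2^k1)" "dyloc \<xi>2 (2^k2)" "dyloc \<xi>3 (2^k3)" "dyloc \<xi>4 (2^k4)"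
    and comparable: "dec_rearr [2^k1, 2^k2, 2^k3, 2^k4] ! 1 \<le> A * dec_rearr [2^k1, 2^k2, 2^k3, 2^k4] ! 2"
  defines "L \<equiv> dec_rearr [2^k1, 2^k2, 2^k3, 2^k4]"
  shows "norm (Psi c V (theta \<theta>0 N) \<xi>1 \<xi>2 \<xi>3 \<xi>4)
           \<le> 12 * A * C * theta \<theta>0 N (L!0) * theta \<theta>0 N (L!1) * L!2 * L!3 / (L!0)^3"
proof -
  have ge1: "1 \<le> (2::real) ^ k" for k :: nat by simp
  note scales = dyadic_scales[OF sum loc ge1 ge1 ge1 ge1, folded L_def]
  have bound_i: "norm (Psi c V (theta \<theta>0 N) \<xi>1 \<xi>2 \<xi>3 \<xi>4)
          \<le> C * theta \<theta>0 N (L!0) * theta \<theta>0 N (L!1) / (L!0)\<^sup>2"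
    using bound N sum loc unfolding Psi_dyadic_bound_def L_def Let_def by simp
  have "0 \<le> C * theta \<theta>0 N (L!0) * theta \<theta>0 N (L!1)"
    using C nonneg by (simp add: theta_def)
  then have "norm (Psi c V (theta \<theta>0 N) \<xi>1 \<xi>2 \<xi>3 \<xi>4)
          \<le> 12 * A * (C * theta \<theta>0 N (L!0) * theta \<theta>0 N (L!1)) * L!2 * L!3 / (L!0)^3"
    using A scales(6)
    by (intro comparable_scales_bound[OF bound_i _ scales(4,8) comparable[folded L_def] scales(7)])
      auto
  then show ?thesis by (simp only: mult.assoc)
qed

lemma Psi_bound_comparable_scales:
  assumes bound: "Psi_dyadic_bound c V \<theta>0 C" and C: "0 \<le> C" and nonneg: "\<forall>x. 0 \<le> \<theta>0 x"
  shows "\<forall>A\<ge>1. \<exists>C. \<forall>N \<xi>1 \<xi>2 \<xi>3 \<xi>4 (k1::nat) (k2::nat) (k3::nat) (k4::nat).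
       N > 1 \<longrightarrow> \<xi>1 + \<xi>2 + \<xi>3 + \<xi>4 = 0 \<longrightarrow>
       dyloc \<xi>1 (2^k1) \<longrightarrow> dyloc \<xi>2 (2^k2) \<longrightarrow> dyloc \<xi>3 (2^k3) \<longrightarrow> dyloc \<xi>4 (2^k4) \<longrightarrow>
       (let Ns = dec_rearr [2^k1, 2^k2, 2^k3, 2^k4]; \<theta> = theta \<theta>0 N in
        Ns ! 1 \<le> A * Ns ! 2 \<longrightarrow>
        norm (Psi c V \<theta> \<xi>1 \<xi>2 \<xi>3 \<xi>4)
          \<le> C * \<theta> (Ns ! 0) * \<theta> (Ns ! 1) * Ns ! 2 * Ns ! 3 / (Ns ! 0)^3)"
  unfolding Let_def using Psi_bound_comparable_scales_instance[OF bound C nonneg] by blast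

theorem proposition4p2:
  fixes V :: "real \<Rightarrow> complex" and \<theta>0 :: "real \<Rightarrow> real" and s c :: real
  assumes V_L1: "integrable lborel V"
    and s_ge: "s \<ge> 1"
    and th_smooth: "smooth_fun \<theta>0"
    and th_even: "\<forall>x. \<theta>0 (- x) = \<theta>0 x"
    and th_mono: "mono_on {0..} \<theta>0"
    and th_large: "\<forall>x. \<bar>x\<bar> \<ge> 2 \<longrightarrow> \<theta>0 x = \<bar>x\<bar> powr s"
    and th_small: "\<forall>x. \<bar>x\<bar> \<le> 1 \<longrightarrow> \<theta>0 x = 1"
  shows
   "(\<exists>K\<ge>1. \<exists>C. \<forall>N \<xi>1 \<xi>2 \<xi>3 \<xi>4 (k1::nat) (k2::nat) (k3::nat) (k4::nat).
       N > 1 \<longrightarrow> \<xi>1 + \<xi>2 + \<xi>3 + \<xi>4 = 0 \<longrightarrow>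
       dyloc \<xi>1 (2^k1) \<longrightarrow> dyloc \<xi>2 (2^k2) \<longrightarrow> dyloc \<xi>3 (2^k3) \<longrightarrow> dyloc \<xi>4 (2^k4) \<longrightarrow>
       (let Ns = dec_rearr [2^k1, 2^k2, 2^k3, 2^k4]; \<theta> = theta \<theta>0 N in
        Ns ! 1 \<ge> K * Ns ! 2 \<longrightarrow>
        norm (Psi c V \<theta> \<xi>1 \<xi>2 \<xi>3 \<xi>4) \<le> C * \<theta> (Ns ! 0) * \<theta> (Ns ! 1) / (Ns ! 0)^2))
  \<and> (\<forall>A\<ge>1. \<exists>C. \<forall>N \<xi>1 \<xi>2 \<xi>3 \<xi>4 (k1::nat) (k2::nat) (k3::nat) (k4::nat).
       N > 1 \<longrightarrow> \<xi>1 + \<xi>2 + \<xi>3 + \<xi>4 = 0 \<longrightarrow>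
       dyloc \<xi>1 (2^k1) \<longrightarrow> dyloc \<xi>2 (2^k2) \<longrightarrow> dyloc \<xi>3 (2^k3) \<longrightarrow> dyloc \<xi>4 (2^k4) \<longrightarrow>
       (let Ns = dec_rearr [2^k1, 2^k2, 2^k3, 2^k4]; \<theta> = theta \<theta>0 N in
        Ns ! 1 \<le> A * Ns ! 2 \<longrightarrow>
        norm (Psi c V \<theta> \<xi>1 \<xi>2 \<xi>3 \<xi>4)
          \<le> C * \<theta> (Ns ! 0) * \<theta> (Ns ! 1) * Ns ! 2 * Ns ! 3 / (Ns ! 0)^3))"
proof -
  obtain C where C: "0 \<le> C" and bound: "Psi_dyadic_bound c V \<theta>0 C"
    using uniform_dyadic_estimate[OF s_ge th_smooth th_even th_mono th_large th_small] by blast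
  have nonneg: "\<forall>x. 0 \<le> \<theta>0 x"
    using theta0_ge_one[OF th_even th_mono th_small] order_trans zero_le_one by blast
  show ?thesis
    using Psi_bound_separated_scales[OF bound] Psi_bound_comparable_scales[OF bound C nonneg]
    by blast
qed

end
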